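(* Consider random parity games on $n=|\mathcal{V}|$ nodes drawn according to the random model (R) with out-degree $d=2$. Then for every node $v$, $$\mathbb{P}(v\text{ is self-winning})\to 0\quad\text{as } n\to\infty.$$
   Context: A parity game is a tuple $(\mathcal{G},a,p)$ with $\mathcal{G}=(\mathcal{V},\mathcal{E})$ a finite directed graph, owners $a:\mathcal{V}\to\{-1,+1\}$ and priorities $p:\mathcal{V}\to\mathbb{N}$. Let $\mathrm{par}(k)=+1$ if $k$ is odd and $-1$ if $k$ is even. For $i\in\{-1,+1\}$, $\mathcal{G}_i$ is the subgraph induced by nodes owned by $i$. A self-winning cycle is a directed cycle in some $\mathcal{G}_i$ whose maximal priority $m$ satisfies $\mathrm{par}(m)=i$; a node is self-winning if it lies on such a cycle. Random model (R) with out-degree $d$: $\mathcal{G}$ is drawn uniformly at random among directed graphs on $n$ labelled nodes in which every node has out-degree exactly $d$; the owners $a(v)$ are i.i.d. uniform on $\{-1,+1\}$; the priorities $p(v)$ are i.i.d. from a distribution on $\mathbb{N}$ with $\mathbb{P}(p(v)\text{ even})=\mathbb{P}(p(v)\text{ odd})=1/2$; all independent. *)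

theory Defs
  imports "HOL-Probability.Probability"
begin

text \<open>Nodes are 0..<n. A graph is a successor map E : nat => nat set.
  Owners: True = player +1 (odd), False = player -1 (even).\<close>

definition out_regular_graphs :: "nat \<Rightarrow> nat \<Rightarrow> (nat \<Rightarrow> nat set) set" where
  "out_regular_graphs n d =
     {E. (\<forall>v<n. E v \<subseteq> {0..<n} \<and> card (E v) = d) \<and> (\<forall>v\<ge>n. E v = {})}"

definition graph_pmf :: "nat \<Rightarrow> nat \<Rightarrow> (nat \<Rightarrow> nat set) pmf" where
  "graph_pmf n d = pmf_of_set (out_regular_graphs n d)"

definition owner_pmf :: "nat \<Rightarrow> (nat \<Rightarrow> bool) pmf" where
  "owner_pmf n = Pi_pmf {0..<n} False (\<lambda>_. bernoulli_pmf (1/2))"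

definition prio_pmf :: "nat \<Rightarrow> nat pmf \<Rightarrow> (nat \<Rightarrow> nat) pmf" where
  "prio_pmf n P = Pi_pmf {0..<n} 0 (\<lambda>_. P)"

definition game_pmf :: "nat \<Rightarrow> nat \<Rightarrow> nat pmf \<Rightarrow>
    ((nat \<Rightarrow> nat set) \<times> (nat \<Rightarrow> bool) \<times> (nat \<Rightarrow> nat)) pmf" where
  "game_pmf n d P = pair_pmf (graph_pmf n d) (pair_pmf (owner_pmf n) (prio_pmf n P))"

definition is_cycle :: "nat \<Rightarrow> (nat \<Rightarrow> nat set) \<Rightarrow> nat list \<Rightarrow> bool" where
  "is_cycle n E xs \<longleftrightarrow> xs \<noteq> [] \<and> distinct xs \<and> set xs \<subseteq> {0..<n} \<and>
     (\<forall>j<length xs. xs ! ((j + 1) mod length xs) \<in> E (xs ! j))"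

definition self_winning_cycle ::
  "nat \<Rightarrow> (nat \<Rightarrow> nat set) \<Rightarrow> (nat \<Rightarrow> bool) \<Rightarrow> (nat \<Rightarrow> nat) \<Rightarrow> nat list \<Rightarrow> bool" where
  "self_winning_cycle n E a p xs \<longleftrightarrow> is_cycle n E xs \<and>
     (\<exists>i. (\<forall>x\<in>set xs. a x = i) \<and> (odd (Max (p ` set xs)) \<longleftrightarrow> i))"

definition self_winning ::
  "nat \<Rightarrow> (nat \<Rightarrow> nat set) \<Rightarrow> (nat \<Rightarrow> bool) \<Rightarrow> (nat \<Rightarrow> nat) \<Rightarrow> nat \<Rightarrow> bool" where
  "self_winning n E a p v \<longleftrightarrow> (\<exists>xs. self_winning_cycle n E a p xs \<and> v \<in> set xs)"

end

theory Submission
  imports Defs "HOL-Library.Ramsey" "HOL-Real_Asymp.Real_Asymp"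
begin

text \<open>A self-winning node \<open>v\<close> lies on a simple cycle of the graph all of whose nodes have the
  same owner. Each node chooses its two successors uniformly and independently, so a fixed
  simple cycle of length \<open>k\<close> is present with probability at most \<open>(2/n)^k\<close>, and it is
  monochromatic with probability \<open>2^(1-k)\<close>. There are \<open>(n-1)\<^sub>m\<close> (falling factorial) cycles of
  length \<open>m + 1\<close> starting at \<open>v\<close>, so by the union bound the probability is at most
  \<open>(2/n) \<Sum>m<n. (n-1)\<^sub>m / n^m\<close>. The first \<open>s\<close> terms of this sum are at most \<open>1\<close> and the
  remaining ones decay geometrically with ratio \<open>1 - s/n\<close>, which gives the bound
  \<open>2s/n + 2/s\<close>; taking \<open>s \<approx> \<surd>n\<close> makes it \<open>O(1/\<surd>n)\<close>.\<close>

lemma measure_pmf_prob_pair_Times: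
  "measure_pmf.prob (pair_pmf M N) (A \<times> B) = measure_pmf.prob M A * measure_pmf.prob N B"
proof -
  have "measure_pmf.prob (pair_pmf M N) (A \<times> B) =
        measure_pmf.prob (pair_pmf M N) ((A \<times> B) \<inter> set_pmf (pair_pmf M N))"
    by (rule measure_Int_set_pmf[symmetric])
  also have "(A \<times> B) \<inter> set_pmf (pair_pmf M N) = (A \<inter> set_pmf M) \<times> (B \<inter> set_pmf N)"
    by (auto simp: set_pair_pmf)
  also have "measure_pmf.prob (pair_pmf M N) \<dots> =
      measure_pmf.prob M (A \<inter> set_pmf M) * measure_pmf.prob N (B \<inter> set_pmf N)"
    by (rule measure_pmf_prob_product) (auto intro: countable_subset[OF _ countable_set_pmf])
  finally show ?thesis by (simp add: measure_Int_set_pmf)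
qed

lemma prod_if_mem_eq_power:
  assumes "finite A" "X \<subseteq> A"
  shows "(\<Prod>u\<in>A. if u \<in> X then c else 1) = (c :: 'a :: comm_monoid_mult) ^ card X"
  using prod.inter_restrict[OF assms(1), of "\<lambda>_. c" X] assms(2)
  by (simp add: Int_absorb1)

lemma card_nsets_containing:
  assumes "finite A" "w \<in> A" "0 < k"
  shows "card (nsets A k \<inter> {S. w \<in> S}) = (card A - 1) choose (k - 1)"
proof -
  have "bij_betw (insert w) (nsets (A - {w}) (k - 1)) (nsets A k \<inter> {S. w \<in> S})"
  proof (rule bij_betw_byWitness[where f' = "\<lambda>S. S - {w}"])
    show "insert w ` nsets (A - {w}) (k - 1) \<subseteq> nsets A k \<inter> {S. w \<in> S}"
      using assms by (auto simp: nsets_def card_insert_if)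
    show "(\<lambda>S. S - {w}) ` (nsets A k \<inter> {S. w \<in> S}) \<subseteq> nsets (A - {w}) (k - 1)"
      by (auto simp: nsets_def)
  qed (auto simp: nsets_def)
  then have "card (nsets A k \<inter> {S. w \<in> S}) = card (nsets (A - {w}) (k - 1))"
    by (rule bij_betw_same_card[symmetric])
  also have "\<dots> = (card A - 1) choose (k - 1)"
    using assms by (simp add: card_Diff_singleton)
  finally show ?thesis .
qed

lemma prob_nsets_containing:
  assumes "finite A" "w \<in> A" "k \<le> card A"
  shows "measure_pmf.prob (pmf_of_set (nsets A k)) {S. w \<in> S} = k / card A"
proof (cases "k = 0")
  case True
  then show ?thesis by (simp add: measure_pmf_of_set)
next
  case False
  have nonempty: "nsets A k \<noteq> {}" and "card A > 0"
    using assms by (auto simp: nsets_eq_empty_iff card_gt_0_iff)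
  have "real k * real (card A choose k) = real (card A) * real ((card A - 1) choose (k - 1))"
    using binomial_absorption[of "k - 1" "card A"] False by (simp flip: of_nat_mult)
  moreover have "card A choose k > 0"
    using assms(3) by simp
  ultimately have "real ((card A - 1) choose (k - 1)) / real (card A choose k) = k / card A"
    using \<open>card A > 0\<close> by (simp add: field_simps)
  then show ?thesis
    using assms nonempty False
    by (simp add: measure_pmf_of_set finite_imp_finite_nsets card_nsets_containing)
qed

lemma graph_pmf_eq_Pi_pmf:
  assumes "d \<le> n"
  shows "graph_pmf n d = Pi_pmf {0..<n} {} (\<lambda>_. pmf_of_set (nsets {0..<n} d))"
proof -
  have "out_regular_graphs n d = PiE_dflt {0..<n} {} (\<lambda>_. nsets {0..<n} d)"
    by (auto simp: out_regular_graphs_def PiE_dflt_def nsets_def intro: finite_subset)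
  moreover have "nsets {0..<n} d \<noteq> {}"
    using assms by (simp add: nsets_eq_empty_iff)
  ultimately show ?thesis
    unfolding graph_pmf_def by (simp add: Pi_pmf_of_set finite_imp_finite_nsets)
qed

definition cycle_graphs :: "nat list \<Rightarrow> (nat \<Rightarrow> nat set) set" where
  "cycle_graphs xs = {E. \<forall>j<length xs. xs ! ((j + 1) mod length xs) \<in> E (xs ! j)}"

lemma prob_cycle_graphs_le:
  assumes "d \<le> n" "distinct xs" "set xs \<subseteq> {0..<n}"
  shows "measure_pmf.prob (graph_pmf n d) (cycle_graphs xs) \<le> (d / n) ^ length xs"
proof -
  define k where "k = length xs"
  define B where "B u = {S. \<forall>j<k. xs ! j = u \<longrightarrow> xs ! ((j + 1) mod k) \<in> S}" for u
  have prob_B: "measure_pmf.prob (pmf_of_set (nsets {0..<n} d)) (B u) =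
      (if u \<in> set xs then d / n else 1)" for u
  proof (cases "u \<in> set xs")
    case True
    then obtain j where j: "j < k" "xs ! j = u" by (auto simp: in_set_conv_nth k_def)
    \<comment> \<open>distinctness: u occurs in the cycle only once, so it has a single prescribed successor\<close>
    then have "B u = {S. xs ! ((j + 1) mod k) \<in> S}"
      using assms(2) by (auto simp: B_def k_def nth_eq_iff_index_eq)
    moreover have "(j + 1) mod k < length xs"
      using j by (metis k_def length_pos_if_in_set mod_less_divisor nth_mem)
    then have "xs ! ((j + 1) mod k) \<in> {0..<n}"
      using assms(3) nth_mem by blast
    ultimately show ?thesis
      using True assms(1) by (simp add: prob_nsets_containing)
  next
    case False
    then have "B u = UNIV"
      by (auto simp: B_def k_def)
    then show ?thesis
      using False by simp
  qed
  have "measure_pmf.prob (graph_pmf n d) (cycle_graphs xs)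
      \<le> measure_pmf.prob (graph_pmf n d) (Pi {0..<n} B)"
    by (intro measure_pmf.finite_measure_mono) (auto simp: cycle_graphs_def B_def k_def)
  also have "\<dots> = (\<Prod>u\<in>{0..<n}. if u \<in> set xs then d / n else 1)"
    unfolding graph_pmf_eq_Pi_pmf[OF assms(1)] by (subst measure_Pi_pmf_Pi) (simp_all add: prob_B)
  also have "\<dots> = (d / n) ^ length xs"
    using assms(2,3) by (simp add: prod_if_mem_eq_power distinct_card)
  finally show ?thesis .
qed

lemma prob_owner_constant_on:
  assumes "X \<subseteq> {0..<n}"
  shows "measure_pmf.prob (owner_pmf n) {a. \<forall>x\<in>X. a x = b} = (1 / 2) ^ card X"
proof -
  have event: "{a. \<forall>x\<in>X. a x = b} = Pi {0..<n} (\<lambda>u. if u \<in> X then {b} else UNIV)"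
    using assms by (auto simp: Pi_def)
  have "measure_pmf.prob (owner_pmf n) {a. \<forall>x\<in>X. a x = b} =
      (\<Prod>u\<in>{0..<n}. if u \<in> X then 1 / 2 else 1)"
    unfolding event owner_pmf_def
    by (subst measure_Pi_pmf_Pi) (auto intro!: prod.cong simp: measure_pmf_single)
  also have "\<dots> = (1 / 2) ^ card X"
    using assms by (simp add: prod_if_mem_eq_power)
  finally show ?thesis .
qed

definition monochromatic_owners :: "nat set \<Rightarrow> (nat \<Rightarrow> bool) set" where
  "monochromatic_owners X = {a. \<exists>i. \<forall>x\<in>X. a x = i}"

lemma prob_monochromatic_owners_le:
  assumes "X \<subseteq> {0..<n}"
  shows "measure_pmf.prob (owner_pmf n) (monochromatic_owners X) \<le> 2 * (1 / 2) ^ card X"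
proof -
  have "monochromatic_owners X = {a. \<forall>x\<in>X. a x = True} \<union> {a. \<forall>x\<in>X. a x = False}"
    by (auto simp: monochromatic_owners_def)
  then have "measure_pmf.prob (owner_pmf n) (monochromatic_owners X) \<le>
      measure_pmf.prob (owner_pmf n) {a. \<forall>x\<in>X. a x = True} +
      measure_pmf.prob (owner_pmf n) {a. \<forall>x\<in>X. a x = False}"
    by (simp add: measure_Un_le)
  then show ?thesis
    using prob_owner_constant_on[OF assms, of True] prob_owner_constant_on[OF assms, of False]
    by simp
qed

lemma is_cycle_rotate:
  assumes "is_cycle n E xs"
  shows "is_cycle n E (rotate i xs)"
  unfolding is_cycle_def
proof (intro conjI allI impI)
  fix j assume j: "j < length (rotate i xs)"
  define k where "k = length xs"
  have "k > 0"
    using assms by (simp add: is_cycle_def k_def)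
  have "(i + (j + 1) mod k) mod k = ((i + j) mod k + 1) mod k"
    by (metis add.assoc mod_add_left_eq mod_add_right_eq)
  moreover have "(i + j) mod k < length xs"
    using \<open>k > 0\<close> by (simp add: k_def)
  ultimately show "rotate i xs ! ((j + 1) mod length (rotate i xs)) \<in> E (rotate i xs ! j)"
    using assms j \<open>k > 0\<close> by (simp add: is_cycle_def nth_rotate k_def)
qed (use assms in \<open>simp_all add: is_cycle_def\<close>)

lemma self_winning_imp_rooted_cycle:
  assumes "self_winning n E a p v"
  obtains ys where "is_cycle n E (v # ys)" "a \<in> monochromatic_owners (set (v # ys))"
proof -
  obtain xs where sw: "self_winning_cycle n E a p xs" and "v \<in> set xs"
    using assms by (auto simp: self_winning_def)
  then obtain i where i: "i < length xs" "xs ! i = v"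
    by (auto simp: in_set_conv_nth)
  have cyc: "is_cycle n E (rotate i xs)"
    using sw by (simp add: self_winning_cycle_def is_cycle_rotate)
  have "hd (rotate i xs) = xs ! (i mod length xs)"
    using i by (intro hd_rotate_conv_nth) auto
  then have "hd (rotate i xs) = v"
    using i by simp
  then have "rotate i xs = v # tl (rotate i xs)"
    using cyc by (metis is_cycle_def list.collapse)
  moreover have "a \<in> monochromatic_owners (set (rotate i xs))"
    using sw by (auto simp: self_winning_cycle_def monochromatic_owners_def)
  ultimately show ?thesis
    using that cyc by metis
qed

lemma prob_self_winning_le_sum:
  assumes "d \<le> n" "v < n"
  shows "measure_pmf.prob (game_pmf n d P) {(E, a, p). self_winning n E a p v}
     \<le> (\<Sum>m<n. real (\<Prod>{n - 1 - m + 1..n - 1}) * (2 * (real d / (2 * real n)) ^ Suc m))"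
proof -
  define D where "D m = {ys. length ys = m \<and> distinct ys \<and> set ys \<subseteq> {0..<n} - {v}}" for m
  define F where
    "F xs = cycle_graphs xs \<times> monochromatic_owners (set xs) \<times> (UNIV :: (nat \<Rightarrow> nat) set)" for xs
  let ?M = "measure_pmf.prob (game_pmf n d P)"
  have finite_D: "finite (D m)" for m
    by (rule finite_subset[OF _ finite_lists_length_eq[of "{0..<n}" m]]) (auto simp: D_def)
  have card_D: "card (D m) = \<Prod>{n - 1 - m + 1..n - 1}" if "m < n" for m
    using card_lists_distinct_length_eq[of "{0..<n} - {v}" m] that assms(2)
    by (simp add: D_def card_Diff_singleton)
  have cover: "{(E, a, p). self_winning n E a p v} \<subseteq> (\<Union>m<n. \<Union>ys\<in>D m. F (v # ys))"
  proof safe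
    fix E a p assume "self_winning n E a p v"
    then obtain ys where cyc: "is_cycle n E (v # ys)" and mono: "a \<in> monochromatic_owners (set (v # ys))"
      by (rule self_winning_imp_rooted_cycle)
    then have "ys \<in> D (length ys)"
      by (auto simp: D_def is_cycle_def)
    moreover have "length (v # ys) \<le> n"
      using cyc card_mono[of "{0..<n}" "set (v # ys)"] by (simp add: is_cycle_def distinct_card)
    moreover have "(E, a, p) \<in> F (v # ys)"
      using cyc mono by (simp add: F_def cycle_graphs_def is_cycle_def)
    ultimately show "(E, a, p) \<in> (\<Union>m<n. \<Union>ys\<in>D m. F (v # ys))"
      by fastforce
  qed
  have single: "?M (F (v # ys)) \<le> 2 * (real d / (2 * real n)) ^ Suc m" if "ys \<in> D m" for ys m
  proof -
    have cyc: "distinct (v # ys)" "set (v # ys) \<subseteq> {0..<n}" "length (v # ys) = Suc m"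
      using that assms(2) by (auto simp: D_def)
    have "?M (F (v # ys)) = measure_pmf.prob (graph_pmf n d) (cycle_graphs (v # ys)) *
        measure_pmf.prob (owner_pmf n) (monochromatic_owners (set (v # ys)))"
      by (simp add: F_def game_pmf_def measure_pmf_prob_pair_Times)
    also have "\<dots> \<le> (d / n) ^ Suc m * (2 * (1 / 2) ^ Suc m)"
    proof (rule mult_mono)
      show "measure_pmf.prob (graph_pmf n d) (cycle_graphs (v # ys)) \<le> (d / n) ^ Suc m"
        using prob_cycle_graphs_le[OF assms(1) cyc(1,2)] cyc(3) by simp
      show "measure_pmf.prob (owner_pmf n) (monochromatic_owners (set (v # ys))) \<le> 2 * (1 / 2) ^ Suc m"
        using prob_monochromatic_owners_le[OF cyc(2)] cyc(1,3) by (simp only: distinct_card)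
    qed simp_all
    also have "\<dots> = 2 * (real d / (2 * real n)) ^ Suc m"
      by (simp add: power_divide power_mult_distrib)
    finally show ?thesis .
  qed
  have "?M {(E, a, p). self_winning n E a p v} \<le> ?M (\<Union>m<n. \<Union>ys\<in>D m. F (v # ys))"
    using cover by (rule measure_pmf.finite_measure_mono) simp
  also have "\<dots> \<le> (\<Sum>m<n. ?M (\<Union>ys\<in>D m. F (v # ys)))"
    by (rule measure_pmf.finite_measure_subadditive_finite) auto
  also have "\<dots> \<le> (\<Sum>m<n. \<Sum>ys\<in>D m. ?M (F (v # ys)))"
    by (intro sum_mono measure_pmf.finite_measure_subadditive_finite finite_D) auto
  also have "\<dots> \<le> (\<Sum>m<n. \<Sum>ys\<in>D m. 2 * (real d / (2 * real n)) ^ Suc m)"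
    by (intro sum_mono single)
  also have "\<dots> = (\<Sum>m<n. real (\<Prod>{n - 1 - m + 1..n - 1}) * (2 * (real d / (2 * real n)) ^ Suc m))"
    by (simp add: card_D)
  finally show ?thesis .
qed

definition falling_ratio :: "nat \<Rightarrow> nat \<Rightarrow> real" where
  "falling_ratio n m = real (\<Prod>{n - 1 - m + 1..n - 1}) / real n ^ m"

lemma falling_ratio_nonneg: "falling_ratio n m \<ge> 0"
  by (simp add: falling_ratio_def prod_nonneg)

lemma falling_ratio_Suc:
  assumes "Suc m \<le> n - 1"
  shows "falling_ratio n (Suc m) = falling_ratio n m * (real (n - 1 - m) / real n)"
proof -
  have "{n - 1 - Suc m + 1..n - 1} = insert (n - 1 - m) {n - 1 - m + 1..n - 1}"
    using assms by (auto simp: atLeastAtMost_insertL[symmetric] Suc_diff_Suc)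
  then have "\<Prod>{n - 1 - Suc m + 1..n - 1} = (n - 1 - m) * \<Prod>{n - 1 - m + 1..n - 1}"
    by simp
  then show ?thesis
    by (simp add: falling_ratio_def field_simps)
qed

lemma falling_ratio_le_1:
  assumes "m \<le> n - 1"
  shows "falling_ratio n m \<le> 1"
  using assms
proof (induction m)
  case 0
  then show ?case by (simp add: falling_ratio_def)
next
  case (Suc m)
  have "falling_ratio n (Suc m) = falling_ratio n m * (real (n - 1 - m) / real n)"
    using Suc.prems by (rule falling_ratio_Suc)
  also have "\<dots> \<le> 1 * 1"
    using Suc by (intro mult_mono falling_ratio_nonneg) auto
  finally show ?case by simp
qed

lemma falling_ratio_le_geometric:
  assumes "s + k \<le> n - 1"
  shows "falling_ratio n (s + k) \<le> (1 - real s / real n) ^ k"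
  using assms
proof (induction k)
  case 0
  then show ?case by (simp add: falling_ratio_le_1)
next
  case (Suc k)
  have "n > 0" "real s \<le> real n"
    using Suc.prems by auto
  have "falling_ratio n (s + Suc k) = falling_ratio n (s + k) * (real (n - 1 - (s + k)) / real n)"
    using Suc.prems falling_ratio_Suc[of "s + k" n] by simp
  also have "\<dots> \<le> (1 - real s / real n) ^ k * (1 - real s / real n)"
  proof (rule mult_mono)
    show "falling_ratio n (s + k) \<le> (1 - real s / real n) ^ k"
      using Suc by simp
    have "real (n - 1 - (s + k)) \<le> real n - real s"
      using Suc.prems by linarith
    then show "real (n - 1 - (s + k)) / real n \<le> 1 - real s / real n"
      using \<open>n > 0\<close> by (simp add: field_simps)
    show "0 \<le> (1 - real s / real n) ^ k"
      using \<open>n > 0\<close> \<open>real s \<le> real n\<close> by simp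
  qed (simp add: falling_ratio_nonneg)
  finally show ?case
    by (simp add: mult.commute)
qed

lemma sum_falling_ratio_le:
  assumes "0 < s" "s \<le> n"
  shows "(\<Sum>m<n. falling_ratio n m) \<le> real s + real n / real s"
proof -
  define r where "r = 1 - real s / real n"
  have r: "0 \<le> r" "r < 1"
    using assms by (auto simp: r_def field_simps)
  have "{..<n} = {..<s} \<union> {s..<n}"
    using assms by auto
  then have "(\<Sum>m<n. falling_ratio n m) = (\<Sum>m<s. falling_ratio n m) + (\<Sum>m\<in>{s..<n}. falling_ratio n m)"
    by (metis sum.union_disjoint finite_lessThan finite_atLeastLessThan
        ivl_disj_int_one(2))
  also have "(\<Sum>m<s. falling_ratio n m) \<le> (\<Sum>m<s. 1)"
    using assms by (intro sum_mono falling_ratio_le_1) auto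
  also have "(\<Sum>m\<in>{s..<n}. falling_ratio n m) = (\<Sum>k<n - s. falling_ratio n (s + k))"
    by (subst sum.atLeastLessThan_shift_0) (simp add: atLeast0LessThan)
  also have "\<dots> \<le> (\<Sum>k<n - s. r ^ k)"
    unfolding r_def by (intro sum_mono falling_ratio_le_geometric) auto
  also have "\<dots> = (1 - r ^ (n - s)) / (1 - r)"
    using r by (simp add: sum_gp_strict)
  also have "\<dots> \<le> 1 / (1 - r)"
    using r by (intro divide_right_mono) auto
  also have "1 / (1 - r) = real n / real s"
    using assms by (simp add: r_def)
  finally show ?thesis by simp
qed

lemma prob_self_winning_le:
  assumes "2 \<le> n" "v < n" "0 < s" "s \<le> n"
  shows "measure_pmf.prob (game_pmf n 2 P) {(E, a, p). self_winning n E a p v}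
     \<le> 2 * real s / real n + 2 / real s"
proof -
  have "measure_pmf.prob (game_pmf n 2 P) {(E, a, p). self_winning n E a p v}
     \<le> (\<Sum>m<n. real (\<Prod>{n - 1 - m + 1..n - 1}) * (2 * (real 2 / (2 * real n)) ^ Suc m))"
    using assms(1,2) by (rule prob_self_winning_le_sum)
  also have "\<dots> = 2 / real n * (\<Sum>m<n. falling_ratio n m)"
    by (simp add: sum_distrib_left falling_ratio_def power_one_over field_simps)
  also have "\<dots> \<le> 2 / real n * (real s + real n / real s)"
    using sum_falling_ratio_le[OF assms(3,4)] by (intro mult_left_mono) auto
  also have "\<dots> = 2 * real s / real n + 2 / real s"
    using assms by (simp add: field_simps)
  finally show ?thesis .
qed

lemma prob_self_winning_le_sqrt:
  assumes "2 \<le> n" "v < n"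
  shows "measure_pmf.prob (game_pmf n 2 P) {(E, a, p). self_winning n E a p v}
     \<le> 2 * (sqrt n + 1) / n + 2 / sqrt n"
proof -
  define s where "s = nat \<lceil>sqrt n\<rceil>"
  have "1 \<le> sqrt n" "sqrt n \<le> n"
    using assms(1) by (simp_all add: power2_eq_square real_le_lsqrt)
  then have s: "sqrt n \<le> s" "s \<le> sqrt n + 1" "0 < s" "s \<le> n"
    unfolding s_def by linarith+
  have "2 * real s / n \<le> 2 * (sqrt n + 1) / n"
    using s by (simp add: divide_right_mono)
  moreover have "2 / real s \<le> 2 / sqrt n"
    using s \<open>1 \<le> sqrt n\<close> by (simp add: frac_le)
  ultimately show ?thesis
    using prob_self_winning_le[OF assms s(3,4), of P] by linarith
qed

theorem mainTheorem5:
  fixes P :: "nat pmf" and v :: nat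
  assumes "measure_pmf.prob P {k. even k} = 1/2"
      and "measure_pmf.prob P {k. odd k} = 1/2"
  shows "(\<lambda>n. measure_pmf.prob (game_pmf n 2 P)
            {(E, a, p). self_winning n E a p v}) \<longlonglongrightarrow> 0"
proof (rule tendsto_sandwich)
  show "\<forall>\<^sub>F n in sequentially. 0 \<le> measure_pmf.prob (game_pmf n 2 P)
            {(E, a, p). self_winning n E a p v}"
    by simp
  show "\<forall>\<^sub>F n in sequentially. measure_pmf.prob (game_pmf n 2 P)
            {(E, a, p). self_winning n E a p v} \<le> 2 * (sqrt n + 1) / n + 2 / sqrt n"
    using eventually_ge_at_top[of "max 2 (Suc v)"]
    by eventually_elim (rule prob_self_winning_le_sqrt; simp)
  show "(\<lambda>n. 2 * (sqrt (real n) + 1) / real n + 2 / sqrt (real n)) \<longlonglongrightarrow> 0"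
    by real_asymp
qed simp

end
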